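(* Let $X$ be a uniformly convex, uniformly smooth real Banach space. Every closed convex cone $K\subseteq X$ has a convex polar $K^\circ$ if and only if every wedge $W(a,b)$ ($a,b\in S^*$, $b\notin\{a,-a\}$) has a convex polar.
   Context: $X^*$ is the norm dual of $X$ with pairing $\langle\cdot,\cdot\rangle$ and $S^*=\{c\in X^*:\|c\|_{X^*}=1\}$. For $a,b\in S^*$, $b\notin\{a,-a\}$, $\delta(a,b)=\{(\lambda a+\mu b)/\|\lambda a+\mu b\|_{X^*}:\lambda,\mu\ge0,(\lambda,\mu)\ne(0,0)\}$, and the wedge is $W(a,b)=\{x\in X:\langle c,x\rangle\le 0\ \forall c\in\delta(a,b)\}$. For a closed convex cone $K$, the metric projection is $P_Kx=\operatorname{argmin}\{\|x-k\|:k\in K\}$ (well defined and single valued here) and the polar is $K^\circ=\{x\in X:P_Kx=0\}$. *)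

theory Defs
  imports "HOL-Analysis.Analysis"
begin

text \<open>The norm dual X* of X is rendered as the space of bounded linear functionals
  bounded linear functionals with the operator norm; the pairing is blinfun_apply.\<close>

definition uniformly_convex :: "'a::real_normed_vector set \<Rightarrow> bool" where
  "uniformly_convex (U::'a set) \<longleftrightarrow> (\<forall>\<epsilon>>0. \<exists>\<delta>>0. \<forall>x y::'a.
     norm x \<le> 1 \<and> norm y \<le> 1 \<and> norm (x - y) \<ge> \<epsilon> \<longrightarrow> norm ((1/2) *\<^sub>R (x + y)) \<le> 1 - \<delta>)"

definition uniformly_smooth :: "'a::real_normed_vector set \<Rightarrow> bool" where
  "uniformly_smooth (U::'a set) \<longleftrightarrow> (\<forall>\<epsilon>>0. \<exists>\<delta>>0. \<forall>t. 0 < t \<and> t < \<delta> \<longrightarrow>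
     (\<forall>x y::'a. norm x = 1 \<and> norm y = 1 \<longrightarrow>
        (norm (x + t *\<^sub>R y) + norm (x - t *\<^sub>R y)) / 2 - 1 \<le> \<epsilon> * t))"

definition metric_proj :: "'a::real_normed_vector set \<Rightarrow> 'a \<Rightarrow> 'a set" where
  "metric_proj K x = {k \<in> K. \<forall>k'\<in>K. norm (x - k) \<le> norm (x - k')}"

definition polar_cone :: "'a::real_normed_vector set \<Rightarrow> 'a set" where
  "polar_cone K = {x. metric_proj K x = {0}}"

definition dual_dir :: "('a::real_normed_vector \<Rightarrow>\<^sub>L real) \<Rightarrow> ('a \<Rightarrow>\<^sub>L real) \<Rightarrow> ('a \<Rightarrow>\<^sub>L real) set" where
  "dual_dir a b = {(1 / norm (l *\<^sub>R a + m *\<^sub>R b)) *\<^sub>R (l *\<^sub>R a + m *\<^sub>R b) | l m.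
      l \<ge> 0 \<and> m \<ge> 0 \<and> (l, m) \<noteq> (0, 0)}"

definition wedge :: "('a::real_normed_vector \<Rightarrow>\<^sub>L real) \<Rightarrow> ('a \<Rightarrow>\<^sub>L real) \<Rightarrow> 'a set" where
  "wedge a b = {x. \<forall>c\<in>dual_dir a b. blinfun_apply c x \<le> 0}"

end

theory Submission
  imports Defs
begin

text \<open>Uniform smoothness makes the norm Gateaux differentiable at every \<open>z \<noteq> 0\<close>, with
  derivative a unit functional \<open>J z\<close>; uniform convexity makes nearest points unique. Hence for
  \<open>z \<noteq> 0\<close> we have \<open>z \<in> K\<degree>\<close> iff \<open>J z \<le> 0\<close> on \<open>K\<close>, and \<open>J z\<close> determines \<open>z / \<parallel>z\<parallel>\<close>. Let
  \<open>x, y \<in> K\<degree>\<close>. If \<open>x\<close> and \<open>y\<close> are collinear, each convex combination is a nonnegative multiple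
  of \<open>x\<close> or of \<open>y\<close>, and \<open>K\<degree>\<close> is a cone. Otherwise \<open>J x\<close> and \<open>J y\<close> are distinct and not
  antipodal, \<open>K \<subseteq> W(J x, J y)\<close> and \<open>x, y \<in> W(J x, J y)\<degree>\<close>; this polar is convex, and polars of
  cones are antitone, so the convex combinations stay in \<open>K\<degree>\<close>.\<close>

definition norm_slope :: "'a::real_normed_vector \<Rightarrow> 'a \<Rightarrow> real \<Rightarrow> real" where
  "norm_slope x h t = (norm (x + t *\<^sub>R h) - norm x) / t"

text \<open>The slopes decrease as \<open>t \<down> 0\<close> (convexity of the norm), so this infimum is the
  right-hand directional derivative of the norm.\<close>
definition norm_dir_deriv :: "'a::real_normed_vector \<Rightarrow> 'a \<Rightarrow> real" where
  "norm_dir_deriv x h = Inf (norm_slope x h ` {0<..})"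

lemma norm_slope_mono:
  assumes "0 < s" "s \<le> t"
  shows "norm_slope x h s \<le> norm_slope x h t"
proof -
  have "0 < t" using assms by simp
  have "x + s *\<^sub>R h = (1 - s/t) *\<^sub>R x + (s/t) *\<^sub>R (x + t *\<^sub>R h)"
    using \<open>0 < t\<close> by (simp add: algebra_simps)
  then have "norm (x + s *\<^sub>R h) \<le> norm ((1 - s/t) *\<^sub>R x) + norm ((s/t) *\<^sub>R (x + t *\<^sub>R h))"
    by (metis norm_triangle_ineq)
  also have "\<dots> = (1 - s/t) * norm x + (s/t) * norm (x + t *\<^sub>R h)"
    using assms \<open>0 < t\<close> by simp
  finally have "norm (x + s *\<^sub>R h) - norm x \<le> (s/t) * (norm (x + t *\<^sub>R h) - norm x)"
    by (simp add: algebra_simps)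
  then have "norm_slope x h s \<le> (s/t) * (norm (x + t *\<^sub>R h) - norm x) / s"
    unfolding norm_slope_def by (rule divide_right_mono) (use assms in simp)
  also have "\<dots> = norm_slope x h t"
    using assms unfolding norm_slope_def by simp
  finally show ?thesis .
qed

lemma abs_norm_slope_le:
  assumes "0 < t"
  shows "\<bar>norm_slope x h t\<bar> \<le> norm h"
proof -
  have "\<bar>norm (x + t *\<^sub>R h) - norm x\<bar> \<le> norm ((x + t *\<^sub>R h) - x)"
    by (rule norm_triangle_ineq3)
  also have "\<dots> = norm h * t" using assms by simp
  finally show ?thesis
    unfolding norm_slope_def abs_div_pos[OF assms, symmetric] pos_divide_le_eq[OF assms] .
qed

lemma norm_slope_ge: "0 < t \<Longrightarrow> - norm h \<le> norm_slope x h t"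
  using abs_norm_slope_le[of t x h] by linarith

lemma norm_dir_deriv_le_slope: "0 < t \<Longrightarrow> norm_dir_deriv x h \<le> norm_slope x h t"
  unfolding norm_dir_deriv_def
proof (rule cInf_lower)
  show "bdd_below (norm_slope x h ` {0<..})"
    by (rule bdd_belowI[where m="- norm h"]) (auto intro: norm_slope_ge)
qed simp

lemma norm_dir_deriv_greatest:
  "(\<And>t. 0 < t \<Longrightarrow> c \<le> norm_slope x h t) \<Longrightarrow> c \<le> norm_dir_deriv x h"
  unfolding norm_dir_deriv_def by (rule cInf_greatest) auto

lemma abs_norm_dir_deriv_le: "\<bar>norm_dir_deriv x h\<bar> \<le> norm h"
proof -
  have "norm_dir_deriv x h \<le> norm_slope x h 1" by (rule norm_dir_deriv_le_slope) simp
  moreover have "- norm h \<le> norm_dir_deriv x h"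
    by (rule norm_dir_deriv_greatest) (rule norm_slope_ge)
  ultimately show ?thesis using abs_norm_slope_le[of 1 x h] by auto
qed

lemma norm_dir_deriv_zero [simp]: "norm_dir_deriv x 0 = 0"
  using abs_norm_dir_deriv_le[of x 0] by simp

lemma norm_dir_deriv_self: "norm_dir_deriv x x = norm x"
proof -
  have "norm_slope x x t = norm x" if "t > 0" for t
  proof -
    have "x + t *\<^sub>R x = (1 + t) *\<^sub>R x" by (simp add: algebra_simps)
    then have "norm (x + t *\<^sub>R x) = (1 + t) * norm x" using that by simp
    then show ?thesis unfolding norm_slope_def using that by (simp add: field_simps)
  qed
  then show ?thesis
    using norm_dir_deriv_le_slope[of 1 x x] norm_dir_deriv_greatest[of "norm x" x x] by simp
qed

lemma norm_slope_add_le: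
  assumes "0 < t"
  shows "norm_slope x (h1 + h2) t \<le> norm_slope x h1 (2*t) + norm_slope x h2 (2*t)"
proof -
  have eq: "x + t *\<^sub>R (h1 + h2) = (1/2) *\<^sub>R (x + (2*t) *\<^sub>R h1) + (1/2) *\<^sub>R (x + (2*t) *\<^sub>R h2)"
    by (simp add: algebra_simps flip: scaleR_add_left)
  have "norm (x + t *\<^sub>R (h1 + h2))
      \<le> (norm (x + (2*t) *\<^sub>R h1) + norm (x + (2*t) *\<^sub>R h2)) / 2"
    unfolding eq by (rule order_trans[OF norm_triangle_ineq]) simp
  then have "norm (x + t *\<^sub>R (h1 + h2)) - norm x
      \<le> ((norm (x + (2*t) *\<^sub>R h1) - norm x) + (norm (x + (2*t) *\<^sub>R h2) - norm x)) / 2"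
    by (simp add: field_simps)
  then have "norm_slope x (h1 + h2) t
      \<le> ((norm (x + (2*t) *\<^sub>R h1) - norm x) + (norm (x + (2*t) *\<^sub>R h2) - norm x)) / 2 / t"
    unfolding norm_slope_def by (rule divide_right_mono) (use assms in simp)
  also have "\<dots> = norm_slope x h1 (2*t) + norm_slope x h2 (2*t)"
    unfolding norm_slope_def by (simp only: add_divide_distrib divide_divide_eq_left)
  finally show ?thesis .
qed

lemma norm_dir_deriv_add_le:
  "norm_dir_deriv x (h1 + h2) \<le> norm_dir_deriv x h1 + norm_dir_deriv x h2"
proof -
  have "norm_dir_deriv x (h1 + h2) - norm_slope x h2 t2 \<le> norm_dir_deriv x h1" if "t2 > 0" for t2
  proof (rule norm_dir_deriv_greatest)
    fix t1 :: real assume "t1 > 0"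
    define t where "t = min t1 t2 / 2"
    have t: "t > 0" using \<open>t1 > 0\<close> \<open>t2 > 0\<close> by (simp add: t_def)
    have "norm_dir_deriv x (h1 + h2) \<le> norm_slope x (h1 + h2) t"
      by (rule norm_dir_deriv_le_slope[OF t])
    also have "\<dots> \<le> norm_slope x h1 (2*t) + norm_slope x h2 (2*t)"
      by (rule norm_slope_add_le[OF t])
    also have "\<dots> \<le> norm_slope x h1 t1 + norm_slope x h2 t2"
      using norm_slope_mono[of "2*t" t1 x h1] norm_slope_mono[of "2*t" t2 x h2] t
      by (simp add: t_def)
    finally show "norm_dir_deriv x (h1 + h2) - norm_slope x h2 t2 \<le> norm_slope x h1 t1"
      by simp
  qed
  then have "norm_dir_deriv x (h1 + h2) - norm_dir_deriv x h1 \<le> norm_dir_deriv x h2"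
    by (intro norm_dir_deriv_greatest) force
  then show ?thesis by simp
qed

lemma norm_dir_deriv_scaleR:
  assumes c: "c > 0"
  shows "norm_dir_deriv x (c *\<^sub>R h) = c * norm_dir_deriv x h"
proof -
  have slope: "norm_slope x (c *\<^sub>R h) t = c * norm_slope x h (c * t)" if "t > 0" for t
    unfolding norm_slope_def using c that by (simp add: field_simps)
  have "norm_dir_deriv x (c *\<^sub>R h) / c \<le> norm_dir_deriv x h"
  proof (rule norm_dir_deriv_greatest)
    fix t :: real assume t: "t > 0"
    have "norm_dir_deriv x (c *\<^sub>R h) \<le> norm_slope x (c *\<^sub>R h) (t / c)"
      using t c by (intro norm_dir_deriv_le_slope) simp
    also have "\<dots> = c * norm_slope x h t" using slope[of "t/c"] t c by simp
    finally show "norm_dir_deriv x (c *\<^sub>R h) / c \<le> norm_slope x h t"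
      using c by (simp add: field_simps)
  qed
  moreover have "c * norm_dir_deriv x h \<le> norm_dir_deriv x (c *\<^sub>R h)"
  proof (rule norm_dir_deriv_greatest)
    fix t :: real assume t: "t > 0"
    have "c * norm_dir_deriv x h \<le> c * norm_slope x h (c * t)"
      using t c by (intro mult_left_mono norm_dir_deriv_le_slope) simp_all
    then show "c * norm_dir_deriv x h \<le> norm_slope x (c *\<^sub>R h) t" using slope[OF t] by simp
  qed
  ultimately show ?thesis using c by (simp add: field_simps)
qed

lemma norm_dir_deriv_scaleR_point:
  assumes c: "c > 0"
  shows "norm_dir_deriv (c *\<^sub>R x) h = norm_dir_deriv x h"
proof -
  have "norm_slope (c *\<^sub>R x) h t = norm_slope x h (t / c)" for t
  proof -
    have "c *\<^sub>R x + t *\<^sub>R h = c *\<^sub>R (x + (t/c) *\<^sub>R h)" using c by (simp add: algebra_simps)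
    then have "norm (c *\<^sub>R x + t *\<^sub>R h) = c * norm (x + (t/c) *\<^sub>R h)" using c by simp
    then show ?thesis unfolding norm_slope_def using c by (simp add: field_simps)
  qed
  then have "norm_slope (c *\<^sub>R x) h ` {0<..} = norm_slope x h ` (\<lambda>t. t / c) ` {0<..}"
    by (simp add: image_image)
  also have "(\<lambda>t. t / c) ` {0<..} = {0<..}"
    using c by (auto simp: image_iff field_simps intro!: exI[of _ "_ * c"])
  finally show ?thesis by (simp add: norm_dir_deriv_def)
qed

lemma norm_dir_deriv_uminus_point: "norm_dir_deriv (- x) h = norm_dir_deriv x (- h)"
proof -
  have "norm_slope (- x) h = norm_slope x (- h)"
  proof
    fix t
    have "- x + t *\<^sub>R h = - (x + t *\<^sub>R (- h))" by simp
    then show "norm_slope (- x) h t = norm_slope x (- h) t"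
      unfolding norm_slope_def by (metis norm_minus_cancel)
  qed
  then show ?thesis unfolding norm_dir_deriv_def by simp
qed

lemma norm_dir_deriv_odd_ge: "0 \<le> norm_dir_deriv x h + norm_dir_deriv x (- h)"
proof -
  have "- norm_slope x h t \<le> norm_dir_deriv x (- h)" if t: "t > 0" for t
  proof (rule norm_dir_deriv_greatest)
    fix s :: real assume s: "s > 0"
    define u where "u = min s t"
    have u: "u > 0" using s t by (simp add: u_def)
    have "2 *\<^sub>R x = (x + u *\<^sub>R h) + (x + u *\<^sub>R (- h))" by (simp add: scaleR_2)
    then have "norm (2 *\<^sub>R x) \<le> norm (x + u *\<^sub>R h) + norm (x + u *\<^sub>R (- h))"
      by (simp only: norm_triangle_ineq)
    then have "0 \<le> ((norm (x + u *\<^sub>R h) - norm x) + (norm (x + u *\<^sub>R (- h)) - norm x)) / u"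
      using u by simp
    then have "0 \<le> norm_slope x h u + norm_slope x (- h) u"
      unfolding norm_slope_def by (simp only: add_divide_distrib)
    also have "\<dots> \<le> norm_slope x h t + norm_slope x (- h) s"
      using norm_slope_mono[of u t x h] norm_slope_mono[of u s x "- h"] u by (simp add: u_def)
    finally show "- norm_slope x h t \<le> norm_slope x (- h) s" by simp
  qed
  then have "- norm_dir_deriv x (- h) \<le> norm_dir_deriv x h"
    by (intro norm_dir_deriv_greatest) force
  then show ?thesis by simp
qed

lemma norm_add_diff_sgn:
  fixes x h :: "'a::real_normed_vector" and t :: real
  assumes "x \<noteq> 0" "h \<noteq> 0"
  defines "\<tau> \<equiv> t * norm h / norm x"
  shows "norm (x + t *\<^sub>R h) + norm (x - t *\<^sub>R h)
    = norm x * (norm (sgn x + \<tau> *\<^sub>R sgn h) + norm (sgn x - \<tau> *\<^sub>R sgn h))"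
proof -
  have "norm x *\<^sub>R (\<tau> *\<^sub>R sgn h) = (norm x * \<tau> / norm h) *\<^sub>R h"
    by (simp add: sgn_div_norm divide_inverse mult.assoc)
  also have "\<dots> = t *\<^sub>R h" using assms by (simp add: \<tau>_def)
  finally have "norm x *\<^sub>R (\<tau> *\<^sub>R sgn h) = t *\<^sub>R h" .
  moreover have "norm x *\<^sub>R sgn x = x" using \<open>x \<noteq> 0\<close> by (simp add: sgn_div_norm)
  ultimately have "x + t *\<^sub>R h = norm x *\<^sub>R (sgn x + \<tau> *\<^sub>R sgn h)"
    and "x - t *\<^sub>R h = norm x *\<^sub>R (sgn x - \<tau> *\<^sub>R sgn h)"
    by (simp_all only: scaleR_right_distrib scaleR_right_diff_distrib)
  then show ?thesis by (simp add: distrib_left)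
qed

lemma uniformly_smooth_norm_add_diff_le:
  assumes "uniformly_smooth (UNIV :: 'a::real_normed_vector set)" and "0 < e"
  obtains d where "0 < d"
    and "\<And>x h :: 'a. \<And>t. x \<noteq> 0 \<Longrightarrow> 0 < t \<Longrightarrow> t * norm h < d * norm x \<Longrightarrow>
           norm (x + t *\<^sub>R h) + norm (x - t *\<^sub>R h) \<le> 2 * norm x + 2 * e * t * norm h"
proof -
  from assms obtain d where "0 < d" and smooth: "\<forall>\<tau>. 0 < \<tau> \<and> \<tau> < d \<longrightarrow>
      (\<forall>u v :: 'a. norm u = 1 \<and> norm v = 1 \<longrightarrow>
        (norm (u + \<tau> *\<^sub>R v) + norm (u - \<tau> *\<^sub>R v)) / 2 - 1 \<le> e * \<tau>)"
    unfolding uniformly_smooth_def by blast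
  show ?thesis
  proof (rule that[OF \<open>0 < d\<close>])
    fix x h :: 'a and t :: real
    assume "x \<noteq> 0" "0 < t" and small: "t * norm h < d * norm x"
    show "norm (x + t *\<^sub>R h) + norm (x - t *\<^sub>R h) \<le> 2 * norm x + 2 * e * t * norm h"
    proof (cases "h = 0")
      case False
      define \<tau> where "\<tau> = t * norm h / norm x"
      have "0 < \<tau>" "\<tau> < d"
        using \<open>x \<noteq> 0\<close> \<open>0 < t\<close> False small by (simp_all add: \<tau>_def pos_divide_less_eq)
      have "norm (sgn x) = 1" "norm (sgn h) = 1" using \<open>x \<noteq> 0\<close> False by (simp_all add: norm_sgn)
      then have "(norm (sgn x + \<tau> *\<^sub>R sgn h) + norm (sgn x - \<tau> *\<^sub>R sgn h)) / 2 - 1 \<le> e * \<tau>"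
        using smooth \<open>0 < \<tau>\<close> \<open>\<tau> < d\<close> by blast
      then have "norm x * (norm (sgn x + \<tau> *\<^sub>R sgn h) + norm (sgn x - \<tau> *\<^sub>R sgn h))
          \<le> norm x * (2 + 2 * e * \<tau>)"
        by (intro mult_left_mono) (simp_all add: field_simps)
      also have "\<dots> = 2 * norm x + 2 * e * t * norm h"
        using \<open>x \<noteq> 0\<close> by (simp add: \<tau>_def algebra_simps)
      finally show ?thesis using norm_add_diff_sgn[OF \<open>x \<noteq> 0\<close> False] by (simp add: \<tau>_def)
    qed simp
  qed
qed

lemma norm_dir_deriv_odd_le:
  assumes "uniformly_smooth (UNIV :: 'a::real_normed_vector set)" and "(x::'a) \<noteq> 0"
  shows "norm_dir_deriv x h + norm_dir_deriv x (- h) \<le> 0"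
proof (rule field_le_epsilon)
  fix e :: real assume "0 < e"
  have "0 < norm h + 1" using norm_ge_zero[of h] by linarith
  define e' where "e' = e / (2 * (norm h + 1))"
  have "0 < e'" using \<open>0 < e\<close> \<open>0 < norm h + 1\<close> by (simp add: e'_def)
  obtain d where "0 < d" and smooth: "\<And>x h :: 'a. \<And>t. x \<noteq> 0 \<Longrightarrow> 0 < t \<Longrightarrow>
      t * norm h < d * norm x \<Longrightarrow>
      norm (x + t *\<^sub>R h) + norm (x - t *\<^sub>R h) \<le> 2 * norm x + 2 * e' * t * norm h"
    using uniformly_smooth_norm_add_diff_le[OF assms(1) \<open>0 < e'\<close>] by blast
  define t where "t = d * norm x / (norm h + 1)"
  have "0 < t" using \<open>0 < d\<close> assms(2) \<open>0 < norm h + 1\<close> by (simp add: t_def)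
  have "t * norm h < t * (norm h + 1)" using \<open>0 < t\<close> by simp
  also have "\<dots> = d * norm x" using \<open>0 < norm h + 1\<close> by (simp add: t_def)
  finally have "t * norm h < d * norm x" .
  have "norm_dir_deriv x h + norm_dir_deriv x (- h) \<le> norm_slope x h t + norm_slope x (- h) t"
    using \<open>0 < t\<close> by (intro add_mono norm_dir_deriv_le_slope)
  also have "\<dots> = (norm (x + t *\<^sub>R h) + norm (x - t *\<^sub>R h) - 2 * norm x) / t"
    unfolding norm_slope_def by (simp add: add_divide_distrib[symmetric])
  also have "\<dots> \<le> (2 * e' * t * norm h) / t"
    using smooth[OF assms(2) \<open>0 < t\<close> \<open>t * norm h < d * norm x\<close>] \<open>0 < t\<close>
    by (intro divide_right_mono) simp_all
  also have "\<dots> = 2 * e' * norm h" using \<open>0 < t\<close> by simp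
  also have "\<dots> \<le> 2 * e' * (norm h + 1)" using \<open>0 < e'\<close> by simp
  also have "\<dots> = e" using \<open>0 < norm h + 1\<close> by (simp add: e'_def field_simps)
  finally show "norm_dir_deriv x h + norm_dir_deriv x (- h) \<le> 0 + e" by simp
qed

lemma norm_dir_deriv_uminus:
  assumes "uniformly_smooth (UNIV :: 'a::real_normed_vector set)" and "(x::'a) \<noteq> 0"
  shows "norm_dir_deriv x (- h) = - norm_dir_deriv x h"
  using norm_dir_deriv_odd_le[OF assms, of h] norm_dir_deriv_odd_ge[of x h] by simp

lemma bounded_linear_norm_dir_deriv:
  assumes "uniformly_smooth (UNIV :: 'a::real_normed_vector set)" and "(x::'a) \<noteq> 0"
  shows "bounded_linear (norm_dir_deriv x)"
proof (rule bounded_linear_intro[where K=1])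
  fix a b :: 'a
  have "- norm_dir_deriv x (a + b) = norm_dir_deriv x (- a + - b)"
    by (simp add: norm_dir_deriv_uminus[OF assms, symmetric])
  also have "\<dots> \<le> - norm_dir_deriv x a - norm_dir_deriv x b"
    using norm_dir_deriv_add_le[of x "- a" "- b"] by (simp add: norm_dir_deriv_uminus[OF assms])
  finally show "norm_dir_deriv x (a + b) = norm_dir_deriv x a + norm_dir_deriv x b"
    using norm_dir_deriv_add_le[of x a b] by simp
next
  fix r :: real and a :: 'a
  show "norm_dir_deriv x (r *\<^sub>R a) = r *\<^sub>R norm_dir_deriv x a"
  proof (cases r "0::real" rule: linorder_cases)
    case less
    have "norm_dir_deriv x (r *\<^sub>R a) = norm_dir_deriv x (- ((- r) *\<^sub>R a))" by simp
    also have "\<dots> = - norm_dir_deriv x ((- r) *\<^sub>R a)" by (rule norm_dir_deriv_uminus[OF assms])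
    also have "\<dots> = r * norm_dir_deriv x a" using norm_dir_deriv_scaleR[of "- r" x a] less by simp
    finally show ?thesis by simp
  qed (simp_all add: norm_dir_deriv_scaleR)
next
  fix a :: 'a
  show "norm (norm_dir_deriv x a) \<le> norm a * 1" using abs_norm_dir_deriv_le[of x a] by simp
qed

text \<open>For \<open>x \<noteq> 0\<close> and a uniformly smooth norm this is the Gateaux derivative of the norm at
  \<open>x\<close>, i.e.\ the normalized duality map; otherwise \<open>Blinfun\<close> returns an unspecified functional.\<close>
definition norm_grad :: "'a::real_normed_vector \<Rightarrow> 'a \<Rightarrow>\<^sub>L real" where
  "norm_grad x = Blinfun (norm_dir_deriv x)"

lemma norm_grad_apply:
  assumes "uniformly_smooth (UNIV :: 'a::real_normed_vector set)" and "(x::'a) \<noteq> 0"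
  shows "norm_grad x h = norm_dir_deriv x h"
  unfolding norm_grad_def
  by (simp add: bounded_linear_Blinfun_apply[OF bounded_linear_norm_dir_deriv[OF assms]])

lemma norm_norm_grad:
  assumes "uniformly_smooth (UNIV :: 'a::real_normed_vector set)" and "(x::'a) \<noteq> 0"
  shows "norm (norm_grad x) = 1"
proof (rule antisym)
  show "norm (norm_grad x) \<le> 1"
    by (rule norm_blinfun_bound) (simp_all add: norm_grad_apply[OF assms] abs_norm_dir_deriv_le)
  have "norm x \<le> norm (norm_grad x) * norm x"
    using norm_blinfun[of "norm_grad x" x] by (simp add: norm_grad_apply[OF assms] norm_dir_deriv_self)
  then show "1 \<le> norm (norm_grad x)" using assms(2) by simp
qed

lemma norm_grad_scaleR:
  assumes "0 < c"
  shows "norm_grad (c *\<^sub>R x) = norm_grad x"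
proof -
  have "norm_dir_deriv (c *\<^sub>R x) = norm_dir_deriv x"
    using assms by (simp add: fun_eq_iff norm_dir_deriv_scaleR_point)
  then show ?thesis by (simp add: norm_grad_def)
qed

lemma norm_grad_uminus:
  assumes "uniformly_smooth (UNIV :: 'a::real_normed_vector set)" and "(x::'a) \<noteq> 0"
  shows "norm_grad (- x) = - norm_grad x"
proof (rule blinfun_eqI)
  fix h
  have "- x \<noteq> 0" using assms(2) by simp
  then show "norm_grad (- x) h = (- norm_grad x) h"
    by (simp add: norm_grad_apply[OF assms(1)] assms(2) norm_dir_deriv_uminus_point
        norm_dir_deriv_uminus[OF assms] uminus_blinfun.rep_eq)
qed

lemma uniformly_convex_midpoint_norm_less:
  assumes "uniformly_convex (UNIV :: 'a::real_normed_vector set)"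
    and "norm u = r" "norm (v::'a) = r" "u \<noteq> v"
  shows "norm ((1/2) *\<^sub>R (u + v)) < r"
proof -
  have "0 < r" using assms(2-4) norm_ge_zero[of u] by fastforce
  define u' v' where "u' = (1/r) *\<^sub>R u" and "v' = (1/r) *\<^sub>R v"
  have "norm u' = 1" "norm v' = 1" using assms(2,3) \<open>0 < r\<close> by (simp_all add: u'_def v'_def)
  have "0 < norm (u' - v')" using assms(4) \<open>0 < r\<close> by (simp add: u'_def v'_def)
  with assms(1) obtain d where "0 < d" and convex: "\<forall>x y :: 'a. norm x \<le> 1 \<and> norm y \<le> 1 \<and>
      norm (x - y) \<ge> norm (u' - v') \<longrightarrow> norm ((1/2) *\<^sub>R (x + y)) \<le> 1 - d"
    unfolding uniformly_convex_def by blast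
  have "(1/2) *\<^sub>R (u + v) = r *\<^sub>R ((1/2) *\<^sub>R (u' + v'))"
    using \<open>0 < r\<close> by (simp add: u'_def v'_def algebra_simps)
  then have "norm ((1/2) *\<^sub>R (u + v)) = r * norm ((1/2) *\<^sub>R (u' + v'))"
    using \<open>0 < r\<close> by simp
  also have "\<dots> \<le> r * (1 - d)"
    using convex \<open>norm u' = 1\<close> \<open>norm v' = 1\<close> \<open>0 < r\<close> by (simp add: mult_left_mono)
  also have "\<dots> < r" using \<open>0 < r\<close> \<open>0 < d\<close> by simp
  finally show ?thesis .
qed

text \<open>Both \<open>sgn x\<close> and \<open>sgn y\<close> are norming points of the common unit functional, hence so is
  their midpoint, which strict convexity forbids unless they coincide.\<close>
lemma sgn_eq_if_norm_grad_eq: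
  assumes UC: "uniformly_convex (UNIV :: 'a::real_normed_vector set)"
    and US: "uniformly_smooth (UNIV :: 'a set)"
    and "(x::'a) \<noteq> 0" "y \<noteq> 0" "norm_grad x = norm_grad y"
  shows "sgn x = sgn y"
proof (rule ccontr)
  assume "sgn x \<noteq> sgn y"
  have grad_sgn: "norm_grad (sgn z) = norm_grad z" if "z \<noteq> 0" for z :: 'a
    using that by (simp add: sgn_div_norm norm_grad_scaleR)
  have value_sgn: "norm_grad z (sgn z) = 1" if "z \<noteq> 0" for z :: 'a
    using that
    by (simp add: norm_grad_apply[OF US] sgn_div_norm norm_dir_deriv_scaleR norm_dir_deriv_self)
  define J where "J = norm_grad x"
  have "J (sgn x) = 1" "J (sgn y) = 1"
    using value_sgn[of x] value_sgn[of y] grad_sgn[of x] grad_sgn[of y] assms(3-5)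
    by (simp_all add: J_def sgn_zero_iff)
  then have "J ((1/2) *\<^sub>R (sgn x + sgn y)) = 1"
    by (simp add: blinfun.add_right blinfun.scaleR_right)
  then have "1 \<le> norm ((1/2) *\<^sub>R (sgn x + sgn y))"
    using norm_blinfun[of J "(1/2) *\<^sub>R (sgn x + sgn y)"] norm_norm_grad[OF US assms(3)]
    by (simp add: J_def)
  moreover have "norm ((1/2) *\<^sub>R (sgn x + sgn y)) < 1"
    using uniformly_convex_midpoint_norm_less[OF UC _ _ \<open>sgn x \<noteq> sgn y\<close>] assms(3,4)
    by (simp add: norm_sgn)
  ultimately show False by simp
qed

lemma collinear_if_norm_grad_eq_or_antipodal:
  assumes UC: "uniformly_convex (UNIV :: 'a::real_normed_vector set)"
    and US: "uniformly_smooth (UNIV :: 'a set)"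
    and "(x::'a) \<noteq> 0" "y \<noteq> 0"
    and "norm_grad y = norm_grad x \<or> norm_grad y = - norm_grad x"
  shows "\<exists>s. y = s *\<^sub>R x"
proof -
  have collinear: "z = (norm z / norm x) *\<^sub>R x" if "z \<noteq> 0" "sgn z = sgn x" for z
  proof -
    have "z = norm z *\<^sub>R sgn z" using \<open>z \<noteq> 0\<close> by (simp add: sgn_div_norm)
    also have "\<dots> = norm z *\<^sub>R sgn x" by (simp only: \<open>sgn z = sgn x\<close>)
    also have "\<dots> = (norm z / norm x) *\<^sub>R x" by (simp add: sgn_div_norm divide_inverse)
    finally show ?thesis .
  qed
  from assms(5) show ?thesis
  proof
    assume "norm_grad y = norm_grad x"
    then have "y = (norm y / norm x) *\<^sub>R x"
      using sgn_eq_if_norm_grad_eq[OF UC US assms(4,3)] collinear assms(4) by simp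
    then show ?thesis ..
  next
    assume "norm_grad y = - norm_grad x"
    then have "norm_grad (- y) = norm_grad x" by (simp add: norm_grad_uminus[OF US assms(4)])
    then have "- y = (norm y / norm x) *\<^sub>R x"
      using sgn_eq_if_norm_grad_eq[OF UC US, of "- y" x] collinear[of "- y"] assms(3,4) by simp
    then have "y = (- (norm y / norm x)) *\<^sub>R x" by (metis minus_minus scaleR_minus_left)
    then show ?thesis ..
  qed
qed

lemma mem_polar_cone_iff:
  assumes UC: "uniformly_convex (UNIV :: 'a::real_normed_vector set)"
    and "cone K" "0 \<in> K"
  shows "(z::'a) \<in> polar_cone K \<longleftrightarrow> (\<forall>k\<in>K. norm z \<le> norm (z - k))"
proof
  assume "z \<in> polar_cone K"
  then have "0 \<in> metric_proj K z" by (simp add: polar_cone_def)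
  then show "\<forall>k\<in>K. norm z \<le> norm (z - k)" by (simp add: metric_proj_def)
next
  assume nearest: "\<forall>k\<in>K. norm z \<le> norm (z - k)"
  \<comment> \<open>a second nearest point \<open>k \<noteq> 0\<close> would make \<open>k/2 \<in> K\<close> strictly nearer\<close>
  have "k = 0" if "k \<in> metric_proj K z" for k
  proof (rule ccontr)
    assume "k \<noteq> 0"
    from that have "k \<in> K" and "norm (z - k) = norm z"
      using nearest \<open>0 \<in> K\<close> unfolding metric_proj_def by force+
    have "(1/2) *\<^sub>R k \<in> K" using \<open>cone K\<close> \<open>k \<in> K\<close> by (simp add: mem_cone)
    then have "norm z \<le> norm (z - (1/2) *\<^sub>R k)" using nearest by blast
    moreover have "z - (1/2) *\<^sub>R k = (1/2) *\<^sub>R (z + (z - k))"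
      by (simp add: algebra_simps flip: scaleR_add_left)
    moreover have "norm ((1/2) *\<^sub>R (z + (z - k))) < norm z"
      using uniformly_convex_midpoint_norm_less[OF UC refl \<open>norm (z - k) = norm z\<close>] \<open>k \<noteq> 0\<close>
      by simp
    ultimately show False by simp
  qed
  moreover have "0 \<in> metric_proj K z" using nearest \<open>0 \<in> K\<close> by (simp add: metric_proj_def)
  ultimately show "z \<in> polar_cone K" unfolding polar_cone_def by blast
qed

lemma polar_cone_scaleR:
  assumes UC: "uniformly_convex (UNIV :: 'a::real_normed_vector set)"
    and "cone K" "0 \<in> K" "(z::'a) \<in> polar_cone K" "0 \<le> c"
  shows "c *\<^sub>R z \<in> polar_cone K"
proof (cases "c = 0")
  case False
  with \<open>0 \<le> c\<close> have "0 < c" by simp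
  have "norm (c *\<^sub>R z) \<le> norm (c *\<^sub>R z - k)" if "k \<in> K" for k
  proof -
    have "(1/c) *\<^sub>R k \<in> K" using \<open>cone K\<close> that \<open>0 < c\<close> by (simp add: mem_cone)
    then have "norm z \<le> norm (z - (1/c) *\<^sub>R k)"
      using \<open>z \<in> polar_cone K\<close> mem_polar_cone_iff[OF UC \<open>cone K\<close> \<open>0 \<in> K\<close>] by blast
    then have "norm (c *\<^sub>R z) \<le> norm (c *\<^sub>R (z - (1/c) *\<^sub>R k))" using \<open>0 < c\<close> by simp
    also have "c *\<^sub>R (z - (1/c) *\<^sub>R k) = c *\<^sub>R z - k" using \<open>0 < c\<close> by (simp add: algebra_simps)
    finally show ?thesis .
  qed
  then show ?thesis using mem_polar_cone_iff[OF UC \<open>cone K\<close> \<open>0 \<in> K\<close>] by blast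
qed (use mem_polar_cone_iff[OF UC \<open>cone K\<close> \<open>0 \<in> K\<close>] in simp)

lemma polar_cone_antimono:
  assumes UC: "uniformly_convex (UNIV :: 'a::real_normed_vector set)"
    and "cone K" "cone L" "0 \<in> K" "K \<subseteq> (L::'a set)"
  shows "polar_cone L \<subseteq> polar_cone K"
  using mem_polar_cone_iff[OF UC \<open>cone K\<close> \<open>0 \<in> K\<close>] mem_polar_cone_iff[OF UC \<open>cone L\<close>]
    assms(4,5)
  by blast

lemma mem_polar_cone_iff_norm_grad:
  assumes UC: "uniformly_convex (UNIV :: 'a::real_normed_vector set)"
    and US: "uniformly_smooth (UNIV :: 'a set)"
    and "cone K" "0 \<in> K" "(z::'a) \<noteq> 0"
  shows "z \<in> polar_cone K \<longleftrightarrow> (\<forall>k\<in>K. norm_grad z k \<le> 0)"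
proof -
  have grad: "norm_grad z k = - norm_dir_deriv z (- k)" for k
    by (simp add: norm_grad_apply[OF US \<open>z \<noteq> 0\<close>] norm_dir_deriv_uminus[OF US \<open>z \<noteq> 0\<close>])
  have "norm_grad z k \<le> 0" if nearest: "\<forall>k\<in>K. norm z \<le> norm (z - k)" and "k \<in> K" for k
  proof -
    have "0 \<le> norm_dir_deriv z (- k)"
    proof (rule norm_dir_deriv_greatest)
      fix t :: real assume "0 < t"
      then have "t *\<^sub>R k \<in> K" using \<open>cone K\<close> \<open>k \<in> K\<close> by (simp add: mem_cone)
      then have "norm z \<le> norm (z + t *\<^sub>R (- k))" using nearest by simp
      then show "0 \<le> norm_slope z (- k) t" using \<open>0 < t\<close> by (simp add: norm_slope_def)
    qed
    then show ?thesis by (simp add: grad)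
  qed
  moreover have "norm z \<le> norm (z - k)" if "norm_grad z k \<le> 0" for k
  proof -
    have "0 \<le> norm_dir_deriv z (- k)" using that by (simp add: grad)
    also have "\<dots> \<le> norm_slope z (- k) 1" by (rule norm_dir_deriv_le_slope) simp
    finally show ?thesis by (simp add: norm_slope_def)
  qed
  ultimately show ?thesis using mem_polar_cone_iff[OF UC \<open>cone K\<close> \<open>0 \<in> K\<close>] by blast
qed

lemma dual_dir_left: "norm a = 1 \<Longrightarrow> a \<in> dual_dir a b"
  unfolding dual_dir_def by (rule CollectI, rule exI[of _ 1], rule exI[of _ 0]) simp

lemma dual_dir_right: "norm b = 1 \<Longrightarrow> b \<in> dual_dir a b"
  unfolding dual_dir_def by (rule CollectI, rule exI[of _ 0], rule exI[of _ 1]) simp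

lemma mem_wedge_iff:
  assumes "norm a = 1" "norm b = 1"
  shows "k \<in> wedge a b \<longleftrightarrow> a k \<le> 0 \<and> b k \<le> 0"
proof
  assume "k \<in> wedge a b"
  then show "a k \<le> 0 \<and> b k \<le> 0"
    using dual_dir_left[OF assms(1)] dual_dir_right[OF assms(2)] unfolding wedge_def by blast
next
  assume "a k \<le> 0 \<and> b k \<le> 0"
  then have "l * a k + m * b k \<le> 0" if "0 \<le> l" "0 \<le> m" for l m :: real
    using that by (simp add: add_nonpos_nonpos mult_nonneg_nonpos)
  then show "k \<in> wedge a b"
    unfolding wedge_def dual_dir_def
    by (auto simp: blinfun.add_left blinfun.scaleR_left divide_nonpos_nonneg)
qed

lemma cone_wedge: "cone (wedge a b)"
  unfolding cone_def wedge_def by (auto simp: blinfun.scaleR_right mult_nonneg_nonpos)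

lemma convex_wedge: "convex (wedge a b)"
  unfolding convex_def wedge_def
  by (auto simp: blinfun.add_right blinfun.scaleR_right mult_nonneg_nonpos intro!: add_nonpos_nonpos)

lemma zero_mem_wedge: "0 \<in> wedge a b"
  unfolding wedge_def by simp

lemma closed_wedge: "closed (wedge a b)"
proof -
  have "wedge a b = (\<Inter>c\<in>dual_dir a b. {x. blinfun_apply c x \<le> 0})"
    unfolding wedge_def by auto
  moreover have "closed {x. blinfun_apply c x \<le> 0}" for c :: "'a \<Rightarrow>\<^sub>L real"
    by (intro closed_Collect_le continuous_intros)
  ultimately show ?thesis by (simp add: closed_INT)
qed

lemma conic_combination_of_collinear:
  fixes x y :: "'a::real_vector"
  assumes "0 \<le> u" "0 \<le> v" "y = s *\<^sub>R x"
  shows "\<exists>c\<ge>0. u *\<^sub>R x + v *\<^sub>R y = c *\<^sub>R x \<or> u *\<^sub>R x + v *\<^sub>R y = c *\<^sub>R y"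
proof (cases "0 \<le> u + v * s")
  case True
  then show ?thesis using assms(3) by (intro exI[of _ "u + v * s"]) (simp add: algebra_simps)
next
  case False
  have "s < 0"
  proof (rule ccontr)
    assume "\<not> s < 0"
    then have "0 \<le> v * s" using \<open>0 \<le> v\<close> by simp
    with False \<open>0 \<le> u\<close> show False by linarith
  qed
  have "u / s + v = (u + v * s) / s" using \<open>s < 0\<close> by (simp add: field_simps)
  then have "0 \<le> u / s + v" using False \<open>s < 0\<close> by (simp add: divide_nonpos_neg)
  moreover have "(u / s + v) * s = u + v * s" using \<open>s < 0\<close> by (simp add: field_simps)
  then have "u *\<^sub>R x + v *\<^sub>R y = (u / s + v) *\<^sub>R y" using assms(3) by (simp add: scaleR_add_left)
  ultimately show ?thesis by blast
qed

lemma convex_polar_cone_if_convex_polar_wedges: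
  assumes UC: "uniformly_convex (UNIV :: 'a::real_normed_vector set)"
    and US: "uniformly_smooth (UNIV :: 'a set)"
    and "cone K" "0 \<in> (K::'a set)"
    and wedges: "\<And>a b :: 'a \<Rightarrow>\<^sub>L real. norm a = 1 \<Longrightarrow> norm b = 1 \<Longrightarrow> b \<noteq> a \<Longrightarrow> b \<noteq> - a \<Longrightarrow>
      convex (polar_cone (wedge a b))"
  shows "convex (polar_cone K)"
proof (rule convexI)
  fix x y :: 'a and u v :: real
  assume x: "x \<in> polar_cone K" and y: "y \<in> polar_cone K" and "0 \<le> u" "0 \<le> v" "u + v = 1"
  show "u *\<^sub>R x + v *\<^sub>R y \<in> polar_cone K"
  proof (cases "x \<noteq> 0 \<and> y \<noteq> 0 \<and> norm_grad y \<noteq> norm_grad x \<and> norm_grad y \<noteq> - norm_grad x")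
    case True
    define W where "W = wedge (norm_grad x) (norm_grad y)"
    have unit: "norm (norm_grad x) = 1" "norm (norm_grad y) = 1"
      using norm_norm_grad[OF US] True by simp_all
    have "cone W" "0 \<in> W" by (simp_all add: W_def cone_wedge zero_mem_wedge)
    have "\<forall>k\<in>K. norm_grad x k \<le> 0" "\<forall>k\<in>K. norm_grad y k \<le> 0"
      using x y True mem_polar_cone_iff_norm_grad[OF UC US \<open>cone K\<close> \<open>0 \<in> K\<close>] by simp_all
    then have "K \<subseteq> W" by (auto simp: W_def mem_wedge_iff[OF unit])
    have "x \<in> polar_cone W" "y \<in> polar_cone W"
      using True mem_polar_cone_iff_norm_grad[OF UC US \<open>cone W\<close> \<open>0 \<in> W\<close>]
      by (simp_all add: W_def mem_wedge_iff[OF unit])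
    moreover have "convex (polar_cone W)" unfolding W_def using wedges unit True by simp
    ultimately have "u *\<^sub>R x + v *\<^sub>R y \<in> polar_cone W"
      using \<open>0 \<le> u\<close> \<open>0 \<le> v\<close> \<open>u + v = 1\<close> by (simp add: convexD)
    then show ?thesis
      using polar_cone_antimono[OF UC \<open>cone K\<close> \<open>cone W\<close> \<open>0 \<in> K\<close> \<open>K \<subseteq> W\<close>] by blast
  next
    case degenerate: False
    have "\<exists>c\<ge>0. u *\<^sub>R x + v *\<^sub>R y = c *\<^sub>R x \<or> u *\<^sub>R x + v *\<^sub>R y = c *\<^sub>R y"
    proof (cases "x = 0 \<or> y = 0")
      case True
      then show ?thesis using \<open>0 \<le> u\<close> \<open>0 \<le> v\<close> by (elim disjE) (simp_all add: exI[of _ u] exI[of _ v])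
    next
      case False
      with degenerate have "\<exists>s. y = s *\<^sub>R x"
        using collinear_if_norm_grad_eq_or_antipodal[OF UC US] by simp
      then show ?thesis using conic_combination_of_collinear \<open>0 \<le> u\<close> \<open>0 \<le> v\<close> by blast
    qed
    then obtain c where "0 \<le> c" "u *\<^sub>R x + v *\<^sub>R y = c *\<^sub>R x \<or> u *\<^sub>R x + v *\<^sub>R y = c *\<^sub>R y"
      by blast
    then show ?thesis
      using polar_cone_scaleR[OF UC \<open>cone K\<close> \<open>0 \<in> K\<close> x \<open>0 \<le> c\<close>]
        polar_cone_scaleR[OF UC \<open>cone K\<close> \<open>0 \<in> K\<close> y \<open>0 \<le> c\<close>]
      by auto
  qed
qed

theorem mainTheorem7:
  assumes "uniformly_convex (UNIV :: 'a::banach set)"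
    and "uniformly_smooth (UNIV :: 'a set)"
  shows "(\<forall>K::'a set. closed K \<and> convex K \<and> cone K \<and> K \<noteq> {} \<longrightarrow> convex (polar_cone K))
     \<longleftrightarrow> (\<forall>a b :: 'a \<Rightarrow>\<^sub>L real. norm a = 1 \<and> norm b = 1 \<and> b \<noteq> a \<and> b \<noteq> - a
            \<longrightarrow> convex (polar_cone (wedge a b)))"
proof (intro iffI allI impI)
  fix a b :: "'a \<Rightarrow>\<^sub>L real"
  assume cones: "\<forall>K::'a set. closed K \<and> convex K \<and> cone K \<and> K \<noteq> {} \<longrightarrow> convex (polar_cone K)"
  have "wedge a b \<noteq> {}" using zero_mem_wedge by blast
  with closed_wedge convex_wedge cone_wedge cones show "convex (polar_cone (wedge a b))" by blast
next
  fix K :: "'a set"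
  assume wedges: "\<forall>a b :: 'a \<Rightarrow>\<^sub>L real. norm a = 1 \<and> norm b = 1 \<and> b \<noteq> a \<and> b \<noteq> - a
      \<longrightarrow> convex (polar_cone (wedge a b))"
    and K: "closed K \<and> convex K \<and> cone K \<and> K \<noteq> {}"
  then have "cone K" by simp
  moreover from K have "0 \<in> K" using cone_contains_0[OF \<open>cone K\<close>] by simp
  ultimately show "convex (polar_cone K)"
    by (rule convex_polar_cone_if_convex_polar_wedges[OF assms]) (use wedges in blast)
qed

end
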